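(* Let $F\in\mathcal{P}$ with $K=\sup_{z\in\mathbb{D}}|\arg F(z)|<\frac{\pi}{2}$, and write $K=\arcsin\frac{2R}{1+R^2}$ with $0\le R<1$. If $\varphi$ is a Schwarz-type function with $\|\varphi\|_\infty\le\frac{1-R}{1+R}$, then $T_{F,\varphi}(f)\in\mathcal{P}$ for every $f\in\mathcal{P}$.
   Context: $\mathbb{D}$ is the open unit disk. $\mathcal{P}$ is the set of analytic $f$ on $\mathbb{D}$ with $\mathrm{Re}\,f>0$ and $f(0)=1$. A Schwarz-type function is an analytic $\varphi:\mathbb{D}\to\mathbb{D}$ with $\varphi(0)=0$. $\|\varphi\|_\infty=\sup_{z\in\mathbb{D}}|\varphi(z)|$. $\arg$ is the principal branch with values in $(-\pi,\pi]$. $T_{F,\varphi}(f)=F\cdot(f\circ\varphi)$. *)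

theory Defs
  imports "HOL-Complex_Analysis.Complex_Analysis"
begin

definition unit_disk :: "complex set" where
  "unit_disk = ball 0 1"

definition class_P :: "(complex \<Rightarrow> complex) set" where
  "class_P = {f. f holomorphic_on unit_disk \<and> (\<forall>z\<in>unit_disk. Re (f z) > 0) \<and> f 0 = 1}"

definition schwarz_type :: "(complex \<Rightarrow> complex) \<Rightarrow> bool" where
  "schwarz_type \<phi> \<longleftrightarrow> \<phi> holomorphic_on unit_disk \<and> \<phi> ` unit_disk \<subseteq> unit_disk \<and> \<phi> 0 = 0"

definition sup_norm :: "(complex \<Rightarrow> complex) \<Rightarrow> real" where
  "sup_norm \<phi> = (SUP z\<in>unit_disk. cmod (\<phi> z))"

definition T_op :: "(complex \<Rightarrow> complex) \<Rightarrow> (complex \<Rightarrow> complex) \<Rightarrow> (complex \<Rightarrow> complex) \<Rightarrow> (complex \<Rightarrow> complex)" where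
  "T_op F \<phi> f = (\<lambda>z. F z * f (\<phi> z))"

end

(*
  With t = tan K = 2R/(1 - R^2), the values of F lie in the sector |Im w| <= t Re w.
  For f in P, (f - 1)/(f + 1) is a Schwarz function, so for |w| < (1 - R)/(1 + R) the value
  f(w) lies in the Apollonius disk (1 + R)|a - 1| < (1 - R)|a + 1|, which is contained in the
  complementary sector t |Im a| < Re a (half-angle pi/2 - K). By the Schwarz lemma,
  |phi(z)| <= ||phi|| |z| < (1 - R)/(1 + R), so F(z) f(phi(z)) is a product of points of two
  sectors whose half-angles add up to less than pi/2, hence has positive real part.
*)
theory Submission
  imports Defs
begin

lemma abs_Im_le_tan_mult_Re:
  assumes Arg: "\<bar>Arg w\<bar> \<le> \<theta>" and \<theta>: "\<theta> < pi / 2"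
  shows "\<bar>Im w\<bar> \<le> tan \<theta> * Re w"
proof (cases "w = 0")
  case False
  define \<alpha> where "\<alpha> = \<bar>Arg w\<bar>"
  have \<alpha>: "0 \<le> \<alpha>" "\<alpha> \<le> pi" "\<alpha> \<le> \<theta>"
    using Arg Arg_le_pi[of w] mpi_less_Arg[of w] by (auto simp: \<alpha>_def)
  have "\<bar>sin (Arg w)\<bar> = sin \<alpha>"
    using \<alpha> sin_ge_zero[of "Arg w"] sin_ge_zero[of "- Arg w"] by (auto simp: \<alpha>_def abs_if)
  then have Im: "\<bar>Im w\<bar> = cmod w * sin \<alpha>"
    using False by (simp add: sin_Arg field_simps)
  have Re: "Re w = cmod w * cos \<alpha>"
    using False by (simp add: \<alpha>_def cos_Arg)
  have cos\<theta>: "cos \<theta> > 0"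
    using \<alpha> \<theta> by (intro cos_gt_zero_pi) auto
  have "0 \<le> sin (\<theta> - \<alpha>)"
    using \<alpha> \<theta> by (intro sin_ge_zero) auto
  then have "sin \<alpha> * cos \<theta> \<le> sin \<theta> * cos \<alpha>"
    by (simp add: sin_diff mult.commute)
  then have "sin \<alpha> \<le> tan \<theta> * cos \<alpha>"
    using cos\<theta> by (simp add: tan_def field_simps)
  then show ?thesis
    using Im Re by (simp add: mult_left_mono mult.left_commute)
qed simp

lemma tan_arcsin:
  assumes "\<bar>x\<bar> < 1"
  shows "tan (arcsin x) = x / sqrt (1 - x\<^sup>2)"
  using assms by (simp add: tan_def cos_arcsin abs_less_iff)

lemma tan_arcsin_double:
  fixes R :: real
  assumes "0 \<le> R" "R < 1"
  shows "tan (arcsin (2 * R / (1 + R\<^sup>2))) = 2 * R / (1 - R\<^sup>2)"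
proof -
  have nz: "1 + R\<^sup>2 \<noteq> 0"
    by (metis add_pos_nonneg less_irrefl zero_le_power2 zero_less_one)
  have "1 - (2 * R / (1 + R\<^sup>2))\<^sup>2 = ((1 + R\<^sup>2)\<^sup>2 - (2 * R)\<^sup>2) / (1 + R\<^sup>2)\<^sup>2"
    using nz by (simp add: power_divide diff_divide_distrib)
  also have "\<dots> = ((1 - R\<^sup>2) / (1 + R\<^sup>2))\<^sup>2"
    by (simp add: power_divide power2_eq_square algebra_simps)
  finally have "sqrt (1 - (2 * R / (1 + R\<^sup>2))\<^sup>2) = (1 - R\<^sup>2) / (1 + R\<^sup>2)"
    using assms by (simp add: abs_square_le_1)
  moreover have "\<bar>2 * R / (1 + R\<^sup>2)\<bar> < 1"
  proof -
    have "0 < (1 - R)\<^sup>2"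
      using assms by simp
    then have "2 * R < 1 + R\<^sup>2"
      by (simp add: power2_eq_square algebra_simps)
    then show ?thesis
      using assms by simp
  qed
  ultimately show ?thesis
    using nz by (simp add: tan_arcsin)
qed

lemma Schwarz_Lemma_le:
  assumes holf: "f holomorphic_on ball 0 1" and f0: "f 0 = 0"
    and bound: "\<And>z. norm z < 1 \<Longrightarrow> norm (f z) \<le> 1"
    and \<xi>: "norm \<xi> < 1"
  shows "norm (f \<xi>) \<le> norm \<xi>"
proof (rule field_le_mult_one_interval)
  fix s :: real
  assume s: "0 < s" "s < 1"
  have "norm ((\<lambda>z. of_real s * f z) \<xi>) \<le> norm \<xi>"
  proof (rule Schwarz_Lemma(1)[OF _ _ _ \<xi>])
    show "(\<lambda>z. of_real s * f z) holomorphic_on ball 0 1"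
      by (intro holomorphic_intros holf)
    show "norm (of_real s * f z) < 1" if "norm z < 1" for z
    proof -
      have "norm (of_real s * f z) = s * norm (f z)"
        using s by (simp add: norm_mult)
      also have "\<dots> \<le> s"
        using bound[OF that] s by (intro mult_left_le) auto
      finally show ?thesis
        using s by simp
    qed
  qed (simp add: f0)
  then show "s * norm (f \<xi>) \<le> norm \<xi>"
    using s by (simp add: norm_mult)
qed

lemma schwarz_type_norm_le:
  assumes "schwarz_type \<phi>" and z: "z \<in> unit_disk"
  shows "norm (\<phi> z) \<le> sup_norm \<phi> * norm z"
proof -
  have hol: "\<phi> holomorphic_on ball 0 1" and maps: "\<And>z. norm z < 1 \<Longrightarrow> norm (\<phi> z) < 1"
    and "\<phi> 0 = 0"
    using assms(1) by (auto simp: schwarz_type_def unit_disk_def image_subset_iff)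
  have le_sup: "norm (\<phi> x) \<le> sup_norm \<phi>" if "norm x < 1" for x
    unfolding sup_norm_def using that maps
    by (intro cSUP_upper) (auto simp: unit_disk_def bdd_above_def intro!: exI[of _ 1] less_imp_le)
  show ?thesis
  proof (cases "sup_norm \<phi> = 0")
    case True
    then show ?thesis
      using le_sup[of z] z by (simp add: unit_disk_def)
  next
    case False
    then have pos: "0 < sup_norm \<phi>"
      using le_sup[of 0] \<open>\<phi> 0 = 0\<close> by simp
    have "norm (\<phi> z / of_real (sup_norm \<phi>)) \<le> norm z"
      using pos z le_sup \<open>\<phi> 0 = 0\<close>
      by (intro Schwarz_Lemma_le holomorphic_intros hol)
        (auto simp: unit_disk_def norm_divide divide_le_eq)
    then show ?thesis
      using pos by (simp add: norm_divide divide_le_eq mult.commute)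
  qed
qed

lemma schwarz_type_norm_lt:
  assumes "schwarz_type \<phi>" "sup_norm \<phi> \<le> r" "0 < r" "z \<in> unit_disk"
  shows "norm (\<phi> z) < r"
proof -
  have "norm (\<phi> z) \<le> sup_norm \<phi> * norm z"
    using assms(1,4) by (rule schwarz_type_norm_le)
  also have "\<dots> \<le> r * norm z"
    using assms(2) by (rule mult_right_mono) simp
  also have "\<dots> < r * 1"
    using assms(3,4) by (intro mult_strict_left_mono) (auto simp: unit_disk_def)
  finally show ?thesis
    by simp
qed

lemma norm_diff_one_lt_norm_add_one:
  fixes a :: complex
  assumes "0 < Re a"
  shows "norm (a - 1) < norm (a + 1)"
proof -
  have "(norm (a - 1))\<^sup>2 < (norm (a + 1))\<^sup>2"
    using assms by (simp only: cmod_power2) (simp add: power2_eq_square algebra_simps)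
  then show ?thesis
    by (rule power_less_imp_less_base) simp
qed

lemma class_P_add_one_nonzero:
  assumes "f \<in> class_P" and "w \<in> unit_disk"
  shows "f w + 1 \<noteq> 0"
proof
  assume "f w + 1 = 0"
  then have "Re (f w) = -1"
    by (simp add: complex_eq_iff)
  with assms show False
    by (auto simp: class_P_def)
qed

lemma class_P_norm_diff_one_le:
  assumes f: "f \<in> class_P" and w: "w \<in> unit_disk"
  shows "norm (f w - 1) \<le> norm w * norm (f w + 1)"
proof -
  have hol: "f holomorphic_on ball 0 1" and pos: "\<And>z. norm z < 1 \<Longrightarrow> 0 < Re (f z)"
    and "f 0 = 1"
    using f by (auto simp: class_P_def unit_disk_def)
  have nz: "f z + 1 \<noteq> 0" if "norm z < 1" for z
    using class_P_add_one_nonzero[OF f] that by (simp add: unit_disk_def)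
  have "norm ((f w - 1) / (f w + 1)) \<le> norm w"
  proof (rule Schwarz_Lemma(1))
    show "(\<lambda>z. (f z - 1) / (f z + 1)) holomorphic_on ball 0 1"
      using nz by (intro holomorphic_intros hol) auto
    show "norm ((f z - 1) / (f z + 1)) < 1" if "norm z < 1" for z
      using norm_diff_one_lt_norm_add_one[OF pos[OF that]] nz[OF that] by (simp add: norm_divide)
  qed (use \<open>f 0 = 1\<close> w in \<open>auto simp: unit_disk_def\<close>)
  then show ?thesis
    using nz w by (simp add: norm_divide divide_le_eq unit_disk_def)
qed

lemma abs_Im_lt_of_norm_diff_one_lt:
  fixes a :: complex and R :: real
  assumes R: "0 \<le> R" "R \<le> 1" and disk: "(1 + R) * norm (a - 1) < (1 - R) * norm (a + 1)"
  shows "2 * R * \<bar>Im a\<bar> < (1 - R\<^sup>2) * Re a"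
proof -
  define x y where "x = Re a" and "y = Im a"
  have "((1 + R) * norm (a - 1))\<^sup>2 < ((1 - R) * norm (a + 1))\<^sup>2"
    using disk R by (intro power_strict_mono) auto
  then have "(1 + R)\<^sup>2 * ((x - 1)\<^sup>2 + y\<^sup>2) < (1 - R)\<^sup>2 * ((x + 1)\<^sup>2 + y\<^sup>2)"
    by (simp add: x_def y_def cmod_power2 power_mult_distrib)
  moreover have "(1 - R)\<^sup>2 * ((x + 1)\<^sup>2 + y\<^sup>2) - (1 + R)\<^sup>2 * ((x - 1)\<^sup>2 + y\<^sup>2)
      = 4 * ((1 + R\<^sup>2) * x - R * (x\<^sup>2 + y\<^sup>2 + 1))"
    by (simp add: power2_eq_square algebra_simps)
  ultimately have circle: "R * (x\<^sup>2 + y\<^sup>2 + 1) < (1 + R\<^sup>2) * x"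
    by simp
  have "0 < (1 + R\<^sup>2) * x"
    using circle R by (smt (verit) mult_nonneg_nonneg zero_le_power2)
  moreover have "0 < 1 + R\<^sup>2"
    by (simp add: add_pos_nonneg)
  ultimately have x: "0 < x"
    by (simp add: zero_less_mult_iff)
  have "4 * R\<^sup>2 * (x\<^sup>2 + y\<^sup>2) \<le> (R * (x\<^sup>2 + y\<^sup>2 + 1))\<^sup>2"
  proof -
    have "(R * (x\<^sup>2 + y\<^sup>2 + 1))\<^sup>2 = (R * (x\<^sup>2 + y\<^sup>2 - 1))\<^sup>2 + 4 * R\<^sup>2 * (x\<^sup>2 + y\<^sup>2)"
      by (simp add: power2_eq_square algebra_simps)
    then show ?thesis
      by simp
  qed
  also have "\<dots> < ((1 + R\<^sup>2) * x)\<^sup>2"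
    using circle R by (intro power_strict_mono) auto
  also have "\<dots> = 4 * R\<^sup>2 * x\<^sup>2 + ((1 - R\<^sup>2) * x)\<^sup>2"
    by (simp add: power2_eq_square algebra_simps)
  finally have "(2 * R * \<bar>y\<bar>)\<^sup>2 < ((1 - R\<^sup>2) * x)\<^sup>2"
    by (simp add: distrib_left power_mult_distrib)
  moreover have "0 \<le> (1 - R\<^sup>2) * x"
    using R x by (simp add: power_le_one)
  ultimately show ?thesis
    by (auto simp: x_def y_def dest: power_less_imp_less_base)
qed

lemma Re_mult_pos_of_sector:
  fixes a b :: complex
  assumes b: "0 < Re b" "\<bar>Im b\<bar> \<le> t * Re b" and a: "t * \<bar>Im a\<bar> < Re a"
  shows "0 < Re (b * a)"
proof -
  have "\<bar>Im b * Im a\<bar> \<le> t * Re b * \<bar>Im a\<bar>"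
    using b(2) by (simp add: abs_mult mult_right_mono)
  also have "\<dots> = Re b * (t * \<bar>Im a\<bar>)"
    by simp
  also have "\<dots> < Re b * Re a"
    using a b(1) by simp
  finally show ?thesis
    by simp
qed

lemma class_P_sector:
  assumes f: "f \<in> class_P" and R: "0 \<le> R" "R < 1" and w: "norm w < (1 - R) / (1 + R)"
  shows "2 * R * \<bar>Im (f w)\<bar> < (1 - R\<^sup>2) * Re (f w)"
proof (rule abs_Im_lt_of_norm_diff_one_lt)
  have "(1 - R) / (1 + R) \<le> 1"
    using R by simp
  then have w_disk: "w \<in> unit_disk"
    using w by (simp add: unit_disk_def)
  have "(1 + R) * norm (f w - 1) \<le> (1 + R) * (norm w * norm (f w + 1))"
    using class_P_norm_diff_one_le[OF f w_disk] R by simp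
  also have "\<dots> < (1 - R) * norm (f w + 1)"
    using w R class_P_add_one_nonzero[OF f w_disk] by (simp add: less_divide_eq mult_ac)
  finally show "(1 + R) * norm (f w - 1) < (1 - R) * norm (f w + 1)" .
qed (use R in auto)

lemma abs_Arg_le_SUP:
  assumes "z \<in> A"
  shows "\<bar>Arg (F z)\<bar> \<le> (SUP z\<in>A. \<bar>Arg (F z)\<bar>)"
proof -
  have "\<bar>Arg w\<bar> \<le> pi" for w
    using Arg_le_pi[of w] mpi_less_Arg[of w] by linarith
  then show ?thesis
    using assms by (intro cSUP_upper bdd_aboveI2) auto
qed

lemma T_op_in_class_P_iff:
  assumes "F \<in> class_P" "schwarz_type \<phi>" "f \<in> class_P"
  shows "T_op F \<phi> f \<in> class_P \<longleftrightarrow> (\<forall>z\<in>unit_disk. 0 < Re (F z * f (\<phi> z)))"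
proof -
  have "(\<lambda>z. F z * f (\<phi> z)) holomorphic_on unit_disk"
    using assms
    by (intro holomorphic_intros holomorphic_on_compose_gen[of \<phi> _ f _, unfolded o_def])
      (auto simp: class_P_def schwarz_type_def)
  then show ?thesis
    using assms by (simp add: class_P_def schwarz_type_def T_op_def)
qed

theorem proposition3p5:
  fixes F \<phi> :: "complex \<Rightarrow> complex" and R :: real
  assumes "F \<in> class_P"
    and "(SUP z\<in>unit_disk. \<bar>Arg (F z)\<bar>) < pi / 2"
    and "0 \<le> R" and "R < 1"
    and "(SUP z\<in>unit_disk. \<bar>Arg (F z)\<bar>) = arcsin (2 * R / (1 + R\<^sup>2))"
    and "schwarz_type \<phi>"
    and "sup_norm \<phi> \<le> (1 - R) / (1 + R)"
  shows "\<forall>f\<in>class_P. T_op F \<phi> f \<in> class_P"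
proof (intro ballI iffD2[OF T_op_in_class_P_iff[OF assms(1,6)]])
  fix f z assume f: "f \<in> class_P" and z: "z \<in> unit_disk"
  define K where "K = (SUP z\<in>unit_disk. \<bar>Arg (F z)\<bar>)"
  have tan_K: "tan K = 2 * R / (1 - R\<^sup>2)"
    using assms(3,4,5) by (simp add: K_def tan_arcsin_double)
  show "0 < Re (F z * f (\<phi> z))"
  proof (rule Re_mult_pos_of_sector)
    show "0 < Re (F z)"
      using assms(1) z by (simp add: class_P_def)
    show "\<bar>Im (F z)\<bar> \<le> tan K * Re (F z)"
      using abs_Arg_le_SUP[OF z] assms(2) by (intro abs_Im_le_tan_mult_Re) (simp_all add: K_def)
    have "norm (\<phi> z) < (1 - R) / (1 + R)"
      using assms(3,4,6,7) z by (intro schwarz_type_norm_lt) auto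
    then have "2 * R * \<bar>Im (f (\<phi> z))\<bar> < (1 - R\<^sup>2) * Re (f (\<phi> z))"
      by (rule class_P_sector[OF f assms(3,4)])
    moreover have "0 < 1 - R\<^sup>2"
      using assms(3,4) by (simp add: abs_square_less_1)
    ultimately show "tan K * \<bar>Im (f (\<phi> z))\<bar> < Re (f (\<phi> z))"
      by (simp add: tan_K field_simps)
  qed
qed

end
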